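(* For every $\pi\in\mathfrak{S}_n$, \[\sum_{k\ge0}\Omega^{(\ell)}(\pi;k)\,t^k=\frac{(1+t)^n}{(1-t)^{n+1}}\left(\frac{4t}{(1+t)^2}\right)^{\operatorname{lpe}(\pi)}\] as formal power series in $t$.
   Context: $\mathfrak{S}_n$ is the symmetric group on $[n]$; permutations are words $(\pi(1),\dots,\pi(n))$. With $\pi(0)=\pi(n+1)=0$, a left peak of $\pi$ is a position $i$ with $1\le i<n$ and $\pi(i-1)<\pi(i)>\pi(i+1)$; $\operatorname{lpe}(\pi)$ is the number of left peaks. For an integer $k\ge0$ let $Z_k$ be the totally ordered set $0<\bar1<1<\bar2<2<\dots<\bar k<k$, with $0$ and unbarred $j$ "plus-type" and barred $\bar j$ "minus-type". The left enriched order polynomial $\Omega^{(\ell)}(\pi;k)$ is the number of sequences $(a_1,\dots,a_n)\in Z_k^n$ with $a_1\le\dots\le a_n$ such that for every $s\in[n-1]$: if $\pi(s)<\pi(s+1)$ then $a_s<a_{s+1}$ or ($a_s=a_{s+1}$ is plus-type); if $\pi(s)>\pi(s+1)$ then $a_s<a_{s+1}$ or ($a_s=a_{s+1}$ is minus-type). *)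

theory Defs
  imports "HOL-Combinatorics.Permutations" "HOL-Library.FuncSet"
    "HOL-Computational_Algebra.Formal_Power_Series"
begin

definition pval :: "nat \<Rightarrow> (nat \<Rightarrow> nat) \<Rightarrow> nat \<Rightarrow> nat" where
  "pval n p i = (if 1 \<le> i \<and> i \<le> n then p i else 0)"

definition lpe :: "nat \<Rightarrow> (nat \<Rightarrow> nat) \<Rightarrow> nat" where
  "lpe n p = card {i. 1 \<le> i \<and> i < n \<and>
      pval n p (i - 1) < pval n p i \<and> pval n p i > pval n p (i + 1)}"

text \<open>Encoding of Z_k as the natural numbers 0..2k with the usual order:
  0 is 0, bar j is 2j-1, j is 2j.  Plus-type = even, minus-type = odd.\<close>
definition Zk :: "nat \<Rightarrow> nat set" where
  "Zk k = {0..2*k}"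

definition plus_type :: "nat \<Rightarrow> bool" where "plus_type z = even z"
definition minus_type :: "nat \<Rightarrow> bool" where "minus_type z = odd z"

definition left_enriched_Omega :: "nat \<Rightarrow> (nat \<Rightarrow> nat) \<Rightarrow> nat \<Rightarrow> nat" where
  "left_enriched_Omega n p k = card {a \<in> {1..n} \<rightarrow>\<^sub>E Zk k.
     (\<forall>s. 1 \<le> s \<and> s < n \<longrightarrow> a s \<le> a (s + 1)) \<and>
     (\<forall>s. 1 \<le> s \<and> s < n \<longrightarrow>
        (p s < p (s + 1) \<longrightarrow> a s < a (s + 1) \<or> (a s = a (s + 1) \<and> plus_type (a s))) \<and>
        (p s > p (s + 1) \<longrightarrow> a s < a (s + 1) \<or> (a s = a (s + 1) \<and> minus_type (a s))))}"

end

(* Appending an entry to a chain is a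
   partial-sum transfer: the number g_{n+1}(v) of chains of length n+1 ending in v is the sum of
   g_n(u) over u < v, plus g_n(v) if v has the parity allowed at step n.  Split the generating
   function of g_n into its even part E_n and odd part O_n, and let F_n = sum_k (sum_{v <= 2k}
   g_n(v)) t^k be the series of the theorem and P_n the analogous series of strict partial sums.
   After an ascent E_{n+1} = F_n and O_{n+1} = t F_n; after a descent E_{n+1} = O_{n+1} = P_n.
   So O_n is E_n or t E_n according to the step before, and eliminating E_n, O_n, P_n gives
   (1 - t) F_{n+1} = (1 + t) F_n, times 4t/(1+t)^2 exactly when n is a left peak.  Iterating from
   F_1 = (1 + t)/(1 - t)^2 gives the formula. *)
theory Submission
  imports Defs
begin

(* d says whether the step is a descent: equal entries are then minus-type (odd), otherwise
   plus-type (even). *)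
definition enriched_le :: "bool \<Rightarrow> nat \<Rightarrow> nat \<Rightarrow> bool" where
  "enriched_le d x y \<longleftrightarrow> x < y \<or> (x = y \<and> (if d then odd x else even x))"

definition enriched_chain :: "nat \<Rightarrow> (nat \<Rightarrow> bool) \<Rightarrow> (nat \<Rightarrow> nat) \<Rightarrow> bool" where
  "enriched_chain n D a \<longleftrightarrow> (\<forall>s. 1 \<le> s \<and> s < n \<longrightarrow> enriched_le (D s) (a s) (a (Suc s)))"

lemma enriched_le_imp_le: "enriched_le d x y \<Longrightarrow> x \<le> y"
  by (auto simp: enriched_le_def)

lemma finite_enriched_le: "finite {u. enriched_le d u v}"
  by (rule finite_subset[of _ "{..v}"]) (auto dest: enriched_le_imp_le)

lemma sum_enriched_le:
  "(\<Sum>u | enriched_le d u v. g u) = (\<Sum>u<v. g u) + (if (if d then odd v else even v) then g v else 0)"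
proof -
  have "{u. enriched_le d u v} = {..<v} \<union> (if (if d then odd v else even v) then {v} else {})"
    by (auto simp: enriched_le_def)
  then show ?thesis by (simp add: add.commute)
qed

lemma enriched_chain_mono:
  assumes "enriched_chain n D a" "1 \<le> i" "i \<le> j" "j \<le> n"
  shows "a i \<le> a j"
  using assms(3,4)
proof (induction j rule: dec_induct)
  case base
  show ?case by simp
next
  case (step j)
  then have "enriched_le (D j) (a j) (a (Suc j))"
    using assms(1,2) by (simp add: enriched_chain_def)
  with step show ?case by (auto dest: enriched_le_imp_le)
qed

definition chains_ending_at :: "nat \<Rightarrow> (nat \<Rightarrow> bool) \<Rightarrow> nat \<Rightarrow> (nat \<Rightarrow> nat) set" where
  "chains_ending_at n D v = {a \<in> {1..n} \<rightarrow>\<^sub>E {0..v}. enriched_chain n D a \<and> a n = v}"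

definition chain_count :: "nat \<Rightarrow> (nat \<Rightarrow> bool) \<Rightarrow> nat \<Rightarrow> 'a::semiring_1" where
  "chain_count n D v = of_nat (card (chains_ending_at n D v))"

lemma finite_chains_ending_at: "finite (chains_ending_at n D v)"
  unfolding chains_ending_at_def
  by (rule finite_subset[OF _ finite_PiE[of "{1..n}" "\<lambda>_. {0..v}"]]) auto

lemma chains_ending_at_disjoint:
  "u \<noteq> v \<Longrightarrow> chains_ending_at n D u \<inter> chains_ending_at n D v = {}"
  unfolding chains_ending_at_def by blast

lemma chain_count_Suc_0: "chain_count (Suc 0) D v = 1"
proof -
  have "chains_ending_at 1 D v = {(\<lambda>x. if x = 1 then v else undefined)}"
    by (auto simp: chains_ending_at_def enriched_chain_def PiE_iff extensional_def fun_eq_iff)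
  then show ?thesis by (simp add: chain_count_def)
qed

lemma chains_ending_at_Suc:
  assumes "n \<ge> 1"
  shows "chains_ending_at (Suc n) D v =
    (\<lambda>a. a(Suc n := v)) ` (\<Union>u\<in>{u. enriched_le (D n) u v}. chains_ending_at n D u)"
    (is "?B = ?extend ` ?A")
proof (intro equalityI subsetI)
  fix b assume "b \<in> ?B"
  then have b: "b \<in> {1..Suc n} \<rightarrow>\<^sub>E {0..v}" "enriched_chain (Suc n) D b" "b (Suc n) = v"
    by (auto simp: chains_ending_at_def)
  let ?a = "b(Suc n := undefined)"
  have "?a \<in> {1..n} \<rightarrow>\<^sub>E {0..b n}"
    using b(1) enriched_chain_mono[OF b(2), of _ n] by (auto simp: PiE_iff extensional_def)
  moreover have "enriched_chain n D ?a"
    using b(2) by (simp add: enriched_chain_def)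
  ultimately have "?a \<in> chains_ending_at n D (b n)"
    by (simp add: chains_ending_at_def)
  moreover have "enriched_le (D n) (b n) v"
    using b(2,3) assms unfolding enriched_chain_def by (metis lessI)
  ultimately have "?a \<in> ?A" by blast
  moreover have "b = ?extend ?a"
    using b(3) by (auto simp: fun_eq_iff)
  ultimately show "b \<in> ?extend ` ?A" by blast
next
  fix b assume "b \<in> ?extend ` ?A"
  then obtain a u where u: "enriched_le (D n) u v" and a: "a \<in> chains_ending_at n D u"
    and b: "b = a(Suc n := v)" by blast
  have "u \<le> v" using u by (rule enriched_le_imp_le)
  with a have "b \<in> {1..Suc n} \<rightarrow>\<^sub>E {0..v}"
    by (auto simp: b chains_ending_at_def PiE_iff extensional_def le_Suc_eq intro: order_trans)
  moreover have "enriched_chain (Suc n) D b"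
    using a u by (auto simp: b chains_ending_at_def enriched_chain_def less_Suc_eq)
  ultimately show "b \<in> ?B" by (simp add: b chains_ending_at_def)
qed

lemma card_UN_chains_ending_at:
  assumes "finite V"
  shows "of_nat (card (\<Union>v\<in>V. chains_ending_at n D v)) = (\<Sum>v\<in>V. chain_count n D v)"
  using assms
  by (simp add: card_UN_disjoint finite_chains_ending_at chains_ending_at_disjoint chain_count_def)

lemma chain_count_Suc:
  assumes "n \<ge> 1"
  shows "chain_count (Suc n) D v = (\<Sum>u | enriched_le (D n) u v. chain_count n D u)"
proof -
  let ?A = "\<Union>u\<in>{u. enriched_le (D n) u v}. chains_ending_at n D u"
  have "inj_on (\<lambda>a. a(Suc n := v)) ?A"
  proof (rule inj_onI)
    fix a b assume "a \<in> ?A" "b \<in> ?A" and eq: "a(Suc n := v) = b(Suc n := v)"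
    then have "a (Suc n) = b (Suc n)"
      by (auto simp: chains_ending_at_def PiE_iff extensional_def)
    with eq show "a = b" by (metis fun_upd_triv fun_upd_upd)
  qed
  then have "chain_count (Suc n) D v = of_nat (card ?A)"
    by (simp add: chain_count_def chains_ending_at_Suc[OF assms] card_image)
  also have "\<dots> = (\<Sum>u | enriched_le (D n) u v. chain_count n D u)"
    by (rule card_UN_chains_ending_at[OF finite_enriched_le])
  finally show ?thesis .
qed

lemma card_enriched_chains:
  assumes "n \<ge> 1"
  shows "of_nat (card {a \<in> {1..n} \<rightarrow>\<^sub>E {0..m}. enriched_chain n D a}) =
    (\<Sum>v\<le>m. chain_count n D v)"
proof -
  have "{a \<in> {1..n} \<rightarrow>\<^sub>E {0..m}. enriched_chain n D a} =
      (\<Union>v\<le>m. chains_ending_at n D v)"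
  proof (intro equalityI subsetI)
    fix a assume a: "a \<in> {a \<in> {1..n} \<rightarrow>\<^sub>E {0..m}. enriched_chain n D a}"
    then have "a \<in> chains_ending_at n D (a n)"
      using enriched_chain_mono[of n D a _ n] by (auto simp: chains_ending_at_def PiE_iff)
    moreover have "a n \<le> m"
      using a assms by (auto simp: PiE_iff)
    ultimately show "a \<in> (\<Union>v\<le>m. chains_ending_at n D v)" by blast
  qed (auto simp: chains_ending_at_def PiE_iff)
  then show ?thesis
    by (simp add: card_UN_chains_ending_at)
qed

definition even_fps :: "(nat \<Rightarrow> 'a::comm_ring_1) \<Rightarrow> 'a fps" where
  "even_fps g = Abs_fps (\<lambda>j. g (2 * j))"

definition odd_fps :: "(nat \<Rightarrow> 'a::comm_ring_1) \<Rightarrow> 'a fps" where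
  "odd_fps g = Abs_fps (\<lambda>j. if j = 0 then 0 else g (2 * j - 1))"

definition sums_atMost_fps :: "(nat \<Rightarrow> 'a::comm_ring_1) \<Rightarrow> 'a fps" where
  "sums_atMost_fps g = Abs_fps (\<lambda>k. \<Sum>v\<le>2 * k. g v)"

definition sums_lessThan_fps :: "(nat \<Rightarrow> 'a::comm_ring_1) \<Rightarrow> 'a fps" where
  "sums_lessThan_fps g = Abs_fps (\<lambda>k. \<Sum>v<2 * k. g v)"

lemma fps_nth_one_minus_X_mult:
  fixes f :: "'a::comm_ring_1 fps"
  shows "fps_nth ((1 - fps_X) * f) k = fps_nth f k - (if k = 0 then 0 else fps_nth f (k - 1))"
  by (simp add: left_diff_distrib)

lemma one_minus_X_mult_sums_atMost_fps:
  "(1 - fps_X) * sums_atMost_fps g = even_fps g + odd_fps g"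
proof (rule fps_ext)
  fix k
  show "fps_nth ((1 - fps_X) * sums_atMost_fps g) k = fps_nth (even_fps g + odd_fps g) k"
  proof (cases k)
    case (Suc j)
    have "2 * k = Suc (Suc (2 * j))" by (simp add: Suc)
    then show ?thesis
      by (simp add: Suc fps_nth_one_minus_X_mult sums_atMost_fps_def even_fps_def odd_fps_def)
  qed (simp add: fps_nth_one_minus_X_mult sums_atMost_fps_def even_fps_def odd_fps_def)
qed

lemma one_minus_X_mult_sums_lessThan_fps:
  "(1 - fps_X) * sums_lessThan_fps g = fps_X * even_fps g + odd_fps g"
proof (rule fps_ext)
  fix k
  show "fps_nth ((1 - fps_X) * sums_lessThan_fps g) k = fps_nth (fps_X * even_fps g + odd_fps g) k"
  proof (cases k)
    case (Suc j)
    have "2 * k = Suc (Suc (2 * j))" by (simp add: Suc)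
    then show ?thesis
      by (simp add: Suc fps_nth_one_minus_X_mult sums_lessThan_fps_def even_fps_def odd_fps_def)
  qed (simp add: fps_nth_one_minus_X_mult sums_lessThan_fps_def even_fps_def odd_fps_def)
qed

lemma even_odd_fps_ascent:
  assumes "\<And>v. h v = (\<Sum>u | enriched_le False u v. g u)"
  shows "even_fps h = sums_atMost_fps g" and "odd_fps h = fps_X * sums_atMost_fps g"
proof -
  have "h v = (if even v then (\<Sum>u\<le>v. g u) else (\<Sum>u<v. g u))" for v
    by (simp add: assms sum_enriched_le lessThan_Suc_atMost[symmetric])
  moreover have "2 * j - 1 = Suc (2 * (j - 1))" if "j \<noteq> 0" for j :: nat
    using that by simp
  ultimately show "even_fps h = sums_atMost_fps g" and "odd_fps h = fps_X * sums_atMost_fps g"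
    by (auto intro!: fps_ext simp: even_fps_def odd_fps_def sums_atMost_fps_def lessThan_Suc_atMost)
qed

lemma even_odd_fps_descent:
  assumes "\<And>v. h v = (\<Sum>u | enriched_le True u v. g u)"
  shows "even_fps h = sums_lessThan_fps g" and "odd_fps h = sums_lessThan_fps g"
proof -
  have "h v = (if odd v then (\<Sum>u<Suc v. g u) else (\<Sum>u<v. g u))" for v
    by (simp add: assms sum_enriched_le)
  moreover have "Suc (2 * j - 1) = 2 * j" if "j \<noteq> 0" for j :: nat
    using that by simp
  ultimately show "even_fps h = sums_lessThan_fps g" and "odd_fps h = sums_lessThan_fps g"
    by (auto intro!: fps_ext simp: even_fps_def odd_fps_def sums_lessThan_fps_def)
qed

lemma odd_fps_chain_count:
  assumes "n \<ge> 1"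
  shows "odd_fps (chain_count n D) =
    (if 2 \<le> n \<and> D (n - 1) then even_fps (chain_count n D) else fps_X * even_fps (chain_count n D))"
proof (cases "n = 1")
  case True
  then show ?thesis
    by (auto intro!: fps_ext simp: even_fps_def odd_fps_def chain_count_Suc_0)
next
  case False
  then obtain m where n: "n = Suc m" and m: "m \<ge> 1"
    using assms by (cases n) auto
  note rec = chain_count_Suc[OF m, of D]
  show ?thesis
  proof (cases "D m")
    case True
    then have "chain_count n D v = (\<Sum>u | enriched_le True u v. chain_count m D u)" for v
      by (simp add: n rec)
    then have "even_fps (chain_count n D) = sums_lessThan_fps (chain_count m D :: nat \<Rightarrow> 'a)"
      and "odd_fps (chain_count n D) = sums_lessThan_fps (chain_count m D :: nat \<Rightarrow> 'a)"
      by (rule even_odd_fps_descent)+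
    then show ?thesis
      using True m by (simp add: n)
  next
    case False
    then have "chain_count n D v = (\<Sum>u | enriched_le False u v. chain_count m D u)" for v
      by (simp add: n rec)
    then have "even_fps (chain_count n D) = sums_atMost_fps (chain_count m D :: nat \<Rightarrow> 'a)"
      and "odd_fps (chain_count n D) = fps_X * sums_atMost_fps (chain_count m D :: nat \<Rightarrow> 'a)"
      by (rule even_odd_fps_ascent)+
    then show ?thesis
      using False by (simp add: n)
  qed
qed

definition left_peak :: "(nat \<Rightarrow> bool) \<Rightarrow> nat \<Rightarrow> bool" where
  "left_peak D i \<longleftrightarrow> 1 \<le> i \<and> D i \<and> (i = 1 \<or> \<not> D (i - 1))"

definition left_peak_count :: "nat \<Rightarrow> (nat \<Rightarrow> bool) \<Rightarrow> nat" where
  "left_peak_count n D = card {i. i < n \<and> left_peak D i}"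

lemma left_peak_count_0 [simp]: "left_peak_count 0 D = 0"
  by (simp add: left_peak_count_def)

lemma left_peak_count_Suc:
  "left_peak_count (Suc n) D = left_peak_count n D + of_bool (left_peak D n)"
proof -
  have "{i. i < Suc n \<and> left_peak D i} =
      {i. i < n \<and> left_peak D i} \<union> (if left_peak D n then {n} else {})"
    by (auto simp: less_Suc_eq)
  then show ?thesis
    by (simp add: left_peak_count_def)
qed

lemma one_minus_fps_X_neq_0 [simp]: "(1 - fps_X :: 'a::comm_ring_1 fps) \<noteq> 0"
  by (rule fps_nonzeroI[of _ 0]) simp

lemma one_plus_fps_X_neq_0 [simp]: "(1 + fps_X :: 'a::comm_ring_1 fps) \<noteq> 0"
  by (rule fps_nonzeroI[of _ 0]) simp

lemma two_sums_lessThan_fps_if_odd_eq_even: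
  fixes g :: "nat \<Rightarrow> 'a::field"
  assumes "odd_fps g = even_fps g"
  shows "2 * sums_lessThan_fps g = (1 + fps_X) * sums_atMost_fps g"
proof -
  have "(1 - fps_X) * (2 * sums_lessThan_fps g) = 2 * (fps_X * even_fps g + odd_fps g)"
    by (simp only: mult.left_commute[of "1 - fps_X"] one_minus_X_mult_sums_lessThan_fps)
  also have "\<dots> = (1 + fps_X) * (even_fps g + odd_fps g)"
    using assms by (simp add: algebra_simps)
  also have "\<dots> = (1 - fps_X) * ((1 + fps_X) * sums_atMost_fps g)"
    by (simp only: one_minus_X_mult_sums_atMost_fps[symmetric] mult.left_commute)
  finally show ?thesis
    by simp
qed

lemma two_sums_lessThan_fps_if_odd_eq_X_even:
  fixes g :: "nat \<Rightarrow> 'a::field"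
  assumes "odd_fps g = fps_X * even_fps g"
  shows "2 * sums_lessThan_fps g = (1 + fps_X) * (4 * fps_X / (1 + fps_X) ^ 2) * sums_atMost_fps g"
proof -
  have "(1 - fps_X) * ((1 + fps_X) * (2 * sums_lessThan_fps g))
      = 2 * (1 + fps_X) * (fps_X * even_fps g + odd_fps g)"
    by (simp only: mult.left_commute[of "1 - fps_X"] one_minus_X_mult_sums_lessThan_fps)
      (simp add: algebra_simps)
  also have "\<dots> = 4 * fps_X * (even_fps g + odd_fps g)"
    using assms by (simp add: algebra_simps)
  also have "\<dots> = (1 - fps_X) * ((1 + fps_X) ^ 2 * (4 * fps_X / (1 + fps_X) ^ 2) * sums_atMost_fps g)"
    by (simp add: one_minus_X_mult_sums_atMost_fps[symmetric] mult_ac)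
  finally have "(1 + fps_X) * (2 * sums_lessThan_fps g)
      = (1 + fps_X) * ((1 + fps_X) * (4 * fps_X / (1 + fps_X) ^ 2) * sums_atMost_fps g)"
    by (simp add: power2_eq_square mult_ac)
  then show ?thesis
    by simp
qed

lemma sums_atMost_fps_chain_count_Suc:
  fixes D :: "nat \<Rightarrow> bool"
  assumes "n \<ge> 1"
  shows "(1 - fps_X) * sums_atMost_fps (chain_count (Suc n) D) =
    (1 + fps_X) * (4 * fps_X / (1 + fps_X) ^ 2) ^ of_bool (left_peak D n)
      * (sums_atMost_fps (chain_count n D) :: 'a::field fps)"
proof (cases "D n")
  case False
  then have rec: "chain_count (Suc n) D v = (\<Sum>u | enriched_le False u v. chain_count n D u)" for v
    by (simp add: chain_count_Suc[OF assms])
  have "(1 - fps_X) * sums_atMost_fps (chain_count (Suc n) D)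
      = (1 + fps_X) * (sums_atMost_fps (chain_count n D) :: 'a fps)"
    by (simp add: one_minus_X_mult_sums_atMost_fps even_odd_fps_ascent[OF rec] distrib_right)
  then show ?thesis
    using False by (simp add: left_peak_def)
next
  case descent: True
  then have rec: "chain_count (Suc n) D v = (\<Sum>u | enriched_le True u v. chain_count n D u)" for v
    by (simp add: chain_count_Suc[OF assms])
  have step: "(1 - fps_X) * sums_atMost_fps (chain_count (Suc n) D)
      = 2 * (sums_lessThan_fps (chain_count n D) :: 'a fps)"
    by (simp add: one_minus_X_mult_sums_atMost_fps even_odd_fps_descent[OF rec])
  note odd = odd_fps_chain_count[OF assms, of D, where 'a = 'a]
  show ?thesis
  proof (cases "2 \<le> n \<and> D (n - 1)")
    case True
    have "2 * sums_lessThan_fps (chain_count n D) = (1 + fps_X) * (sums_atMost_fps (chain_count n D) :: 'a fps)"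
      by (rule two_sums_lessThan_fps_if_odd_eq_even[OF odd[unfolded if_P[OF True]]])
    with step True show ?thesis
      by (simp add: left_peak_def)
  next
    case False
    have "2 * sums_lessThan_fps (chain_count n D) =
        (1 + fps_X) * (4 * fps_X / (1 + fps_X) ^ 2) * (sums_atMost_fps (chain_count n D) :: 'a fps)"
      by (rule two_sums_lessThan_fps_if_odd_eq_X_even[OF odd[unfolded if_not_P[OF False]]])
    moreover have "left_peak D n"
      using descent False assms by (auto simp: left_peak_def)
    ultimately show ?thesis
      using step by simp
  qed
qed

lemma sums_atMost_fps_chain_count_closed_form:
  fixes D :: "nat \<Rightarrow> bool"
  assumes "n \<ge> 1"
  shows "(1 - fps_X) ^ (n + 1) * (sums_atMost_fps (chain_count n D) :: 'a::field fps) =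
    (1 + fps_X) ^ n * (4 * fps_X / (1 + fps_X) ^ 2) ^ left_peak_count n D"
  using assms
proof (induction n rule: nat_induct_at_least)
  case base
  let ?g = "chain_count (Suc 0) D :: nat \<Rightarrow> 'a"
  have E: "(1 - fps_X) * even_fps ?g = 1"
    by (rule fps_ext) (simp add: fps_nth_one_minus_X_mult even_fps_def chain_count_Suc_0)
  have "odd_fps ?g = fps_X * even_fps ?g"
    using odd_fps_chain_count[of "Suc 0" D] by simp
  then have S: "(1 - fps_X) * sums_atMost_fps ?g = (1 + fps_X) * even_fps ?g"
    using one_minus_X_mult_sums_atMost_fps[of ?g] by (simp add: distrib_right)
  have "(1 - fps_X) ^ (1 + 1) * sums_atMost_fps ?g = (1 - fps_X) * ((1 - fps_X) * sums_atMost_fps ?g)"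
    by (simp add: power2_eq_square mult.assoc)
  also have "\<dots> = (1 + fps_X) * ((1 - fps_X) * even_fps ?g)"
    by (simp add: S mult.left_commute)
  also have "\<dots> = 1 + fps_X"
    by (simp add: E)
  finally show ?case
    using left_peak_count_Suc[of 0 D] by (simp add: left_peak_def)
next
  case (Suc n)
  let ?c = "4 * fps_X / (1 + fps_X) ^ 2 :: 'a fps"
  have "(1 - fps_X) ^ (Suc n + 1) * sums_atMost_fps (chain_count (Suc n) D)
      = (1 - fps_X) ^ (n + 1) * ((1 - fps_X) * sums_atMost_fps (chain_count (Suc n) D))"
    by (simp add: mult_ac)
  also have "\<dots> = (1 + fps_X) * ?c ^ of_bool (left_peak D n)
      * ((1 - fps_X) ^ (n + 1) * sums_atMost_fps (chain_count n D))"
    by (simp add: sums_atMost_fps_chain_count_Suc[OF Suc.hyps] mult_ac)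
  also have "\<dots> = (1 + fps_X) * ?c ^ of_bool (left_peak D n)
      * ((1 + fps_X) ^ n * ?c ^ left_peak_count n D)"
    by (simp only: Suc.IH)
  also have "\<dots> = (1 + fps_X) ^ Suc n * ?c ^ left_peak_count (Suc n) D"
    by (simp only: left_peak_count_Suc power_add power_Suc mult_ac)
  finally show ?case .
qed

theorem fps_card_enriched_chains:
  fixes D :: "nat \<Rightarrow> bool"
  shows "(Abs_fps (\<lambda>k. of_nat (card {a \<in> {1..n} \<rightarrow>\<^sub>E {0..2 * k}. enriched_chain n D a}))
      :: 'a::field fps)
    = (1 + fps_X) ^ n / (1 - fps_X) ^ (n + 1) * (4 * fps_X / (1 + fps_X) ^ 2) ^ left_peak_count n D"
proof -
  let ?F = "Abs_fps (\<lambda>k. of_nat (card {a \<in> {1..n} \<rightarrow>\<^sub>E {0..2 * k}. enriched_chain n D a}))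
    :: 'a fps"
  let ?R = "(1 + fps_X) ^ n * (4 * fps_X / (1 + fps_X) ^ 2) ^ left_peak_count n D :: 'a fps"
  have eq: "(1 - fps_X) ^ (n + 1) * ?F = ?R"
  proof (cases "n = 0")
    case True
    then have "?F = Abs_fps (\<lambda>_. 1)"
      by (simp add: enriched_chain_def)
    then have "(1 - fps_X) * ?F = 1"
      by (auto intro!: fps_ext simp: fps_nth_one_minus_X_mult)
    with True show ?thesis by simp
  next
    case False
    then have "n \<ge> 1" by simp
    then have "?F = sums_atMost_fps (chain_count n D)"
      by (simp only: sums_atMost_fps_def card_enriched_chains)
    with sums_atMost_fps_chain_count_closed_form[OF \<open>n \<ge> 1\<close>, of D] show ?thesis
      by simp
  qed
  have unit: "is_unit ((1 - fps_X :: 'a fps) ^ (n + 1))"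
    by simp
  have "?F = ?R / (1 - fps_X) ^ (n + 1)"
    unfolding unit_eq_div2[OF unit] using eq by (simp only: mult.commute)
  then show ?thesis
    by (simp only: unit_div_commute[OF unit])
qed

definition descent :: "(nat \<Rightarrow> nat) \<Rightarrow> nat \<Rightarrow> bool" where
  "descent p s \<longleftrightarrow> p (Suc s) < p s"

lemma left_enriched_Omega_eq_card_enriched_chains:
  assumes "inj_on p {1..n}"
  shows "left_enriched_Omega n p k =
    card {a \<in> {1..n} \<rightarrow>\<^sub>E {0..2 * k}. enriched_chain n (descent p) a}"
proof -
  have "p s \<noteq> p (Suc s)" if "1 \<le> s" "s < n" for s
    using inj_onD[OF assms, of s "Suc s"] that by auto
  then have step_iff: "(a s \<le> a (s + 1) \<and>
        (p s < p (s + 1) \<longrightarrow> a s < a (s + 1) \<or> (a s = a (s + 1) \<and> plus_type (a s))) \<and>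
        (p s > p (s + 1) \<longrightarrow> a s < a (s + 1) \<or> (a s = a (s + 1) \<and> minus_type (a s))))
      \<longleftrightarrow> enriched_le (descent p s) (a s) (a (Suc s))" if "1 \<le> s" "s < n" for a s
    using that by (fastforce simp: enriched_le_def descent_def plus_type_def minus_type_def)
  then show ?thesis
    unfolding left_enriched_Omega_def Zk_def enriched_chain_def
    by (intro arg_cong[where f = card] Collect_cong) (use step_iff in blast)
qed

lemma lpe_eq_left_peak_count:
  assumes "p permutes {1..n}"
  shows "lpe n p = left_peak_count n (descent p)"
proof -
  have "1 \<le> i \<and> i < n \<and> pval n p (i - 1) < pval n p i \<and> pval n p i > pval n p (i + 1)
      \<longleftrightarrow> i < n \<and> left_peak (descent p) i" for i
  proof (cases "1 \<le> i \<and> i < n")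
    case True
    have "p i \<ge> 1"
      using True permutes_in_image[OF assms, of i] by simp
    moreover have "p (i - 1) \<noteq> p i"
      using True inj_eq[OF permutes_inj[OF assms], of "i - 1" i] by auto
    ultimately have rise: "pval n p (i - 1) < pval n p i \<longleftrightarrow> i = 1 \<or> \<not> descent p (i - 1)"
      using True by (auto simp: pval_def descent_def)
    have fall: "pval n p i > pval n p (i + 1) \<longleftrightarrow> descent p i"
      using True by (simp add: pval_def descent_def)
    show ?thesis
      using True by (simp only: rise fall left_peak_def) blast
  qed (auto simp: left_peak_def)
  then show ?thesis
    by (simp add: lpe_def left_peak_count_def)
qed

theorem theorem4p6:
  fixes p :: "nat \<Rightarrow> nat" and n :: nat
  assumes "p permutes {1..n}"
  shows "(Abs_fps (\<lambda>k. of_nat (left_enriched_Omega n p k)) :: rat fps)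
    = (1 + fps_X) ^ n / (1 - fps_X) ^ (n + 1)
      * (4 * fps_X / (1 + fps_X) ^ 2) ^ (lpe n p)"
  using fps_card_enriched_chains[of n "descent p"]
  by (simp add: left_enriched_Omega_eq_card_enriched_chains[OF permutes_inj_on[OF assms]]
      lpe_eq_left_peak_count[OF assms])

end
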